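(* Let $\varphi=\frac{1+\sqrt5}{2}$, $\theta_0=\left(\frac12,\frac1\varphi,\frac1{\varphi^2}\right)$ and $m=(0,\frac12,\frac12)$. Then the language $\mathcal L'_m$ has complexity function $2n+1$ for all $n\ge0$, and the language $\mathcal L_m=\mathcal L_{m,\theta_0}$ has complexity function $2n+3$ for all $n\ge 2$.
   Context: $f_{\theta_0}(m)\in\{a,b,c\}^{\mathbb N}$ records, in order, the successive intersections of the half line $m+\mathbb R_+\theta_0$ with the planes $X=n$ (letter $a$), $Y=n$ (letter $b$), $Z=n$ (letter $c$), $n\in\mathbb Z$; $\mathcal L_m$ is its set of finite factors. The complexity function of a language counts its words of length $n$. The face $X=0$ is identified with $(\mathbb R/\mathbb Z)^2$ via $(y,z)$ and partitioned, up to boundaries, into seven sets, for $(y,z)\in[0,1)^2$: $P_{a_7}$: $y<4-2\varphi,\ z<2\varphi-3$; $P_{a_4}$: $y>4-2\varphi,\ z<2\varphi-3$; $P_{a_2}$: $y<4-2\varphi,\ 2\varphi-3<z<(2-\varphi)+y/\varphi$; $P_{a_1}$: $y<4-2\varphi,\ z>(2-\varphi)+y/\varphi$; $P_{a_5}$: $y>4-2\varphi,\ 2\varphi-3<z<(3-2\varphi)+y/\varphi$; $P_{a_3}$: $y>4-2\varphi,\ (3-2\varphi)+y/\varphi<z<(2-\varphi)+y/\varphi$; $P_{a_6}$: $y>4-2\varphi,\ z>(2-\varphi)+y/\varphi$. $v=v_0v_1v_2\cdots\in\{a_1,\dots,a_7\}^{\mathbb N}$ is defined by $v_k=a_i$ iff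 $m+\frac{2k}{\varphi}(1,-1)\bmod 1\in P_{a_i}$ (the coding of the translation $s\mapsto s+\frac2\varphi\bmod 1$ on the circle through $m$ in direction $(1,-1)$ by the pieces it crosses); one has $f_{\theta_0}(m)=\Phi(v)$ where $\Phi$ is the morphism $\Phi(a_1)=acb$, $\Phi(a_2)=abc$, $\Phi(a_3)=abcb$, $\Phi(a_4)=abb$, $\Phi(a_5)=abbc$, $\Phi(a_6)=acbb$, $\Phi(a_7)=ab$. $\mathcal L'_m$ is the set of finite factors of $v$. *)

theory Defs
  imports Complex_Main
begin

datatype abc = LA | LB | LC

definition phi :: real where "phi = (1 + sqrt 5) / 2"

type_synonym point3 = "real \<times> real \<times> real"

definition theta0 :: point3 where "theta0 = (1/2, 1/phi, 1/phi^2)"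
definition m0 :: point3 where "m0 = (0, 1/2, 1/2)"

definition pt3 :: "point3 \<Rightarrow> point3 \<Rightarrow> real \<Rightarrow> point3" where
  "pt3 m \<theta> t = (fst m + t * fst \<theta>, fst (snd m) + t * fst (snd \<theta>),
                  snd (snd m) + t * snd (snd \<theta>))"

definition crossing_times :: "point3 \<Rightarrow> point3 \<Rightarrow> real set" where
  "crossing_times m \<theta> = {t. t \<ge> 0 \<and>
     (fst (pt3 m \<theta> t) \<in> \<int> \<or> fst (snd (pt3 m \<theta> t)) \<in> \<int> \<or> snd (snd (pt3 m \<theta> t)) \<in> \<int>)}"

definition crossing_letter :: "point3 \<Rightarrow> point3 \<Rightarrow> real \<Rightarrow> abc" where
  "crossing_letter m \<theta> t =
     (if fst (pt3 m \<theta> t) \<in> \<int> then LA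
      else if fst (snd (pt3 m \<theta> t)) \<in> \<int> then LB else LC)"

definition billiard_word :: "point3 \<Rightarrow> point3 \<Rightarrow> nat \<Rightarrow> abc" where
  "billiard_word m \<theta> k = crossing_letter m \<theta>
     (THE t. t \<in> crossing_times m \<theta> \<and> card {s \<in> crossing_times m \<theta>. s < t} = k)"

definition factors :: "(nat \<Rightarrow> 'a) \<Rightarrow> 'a list set" where
  "factors w = {u. \<exists>i. u = map w [i..<i + length u]}"

definition complexity :: "'a list set \<Rightarrow> nat \<Rightarrow> nat" where
  "complexity L n = card {u \<in> L. length u = n}"

text \<open>Pieces of the face X=0, in coordinates (y,z) \<in> [0,1)^2, indexed by i = 1..7.\<close>
definition piece :: "nat \<Rightarrow> (real \<times> real) set" where
  "piece i = {(y,z). 0 \<le> y \<and> y < 1 \<and> 0 \<le> z \<and> z < 1 \<and>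
     (if i = 7 then y < 4 - 2*phi \<and> z < 2*phi - 3
      else if i = 4 then y > 4 - 2*phi \<and> z < 2*phi - 3
      else if i = 2 then y < 4 - 2*phi \<and> 2*phi - 3 < z \<and> z < (2 - phi) + y/phi
      else if i = 1 then y < 4 - 2*phi \<and> z > (2 - phi) + y/phi
      else if i = 5 then y > 4 - 2*phi \<and> 2*phi - 3 < z \<and> z < (3 - 2*phi) + y/phi
      else if i = 3 then y > 4 - 2*phi \<and> (3 - 2*phi) + y/phi < z \<and> z < (2 - phi) + y/phi
      else if i = 6 then y > 4 - 2*phi \<and> z > (2 - phi) + y/phi
      else False)}"

definition face_point :: "point3 \<Rightarrow> nat \<Rightarrow> real \<times> real" where
  "face_point m k = (frac (fst (snd m) + 2 * real k / phi), frac (snd (snd m) - 2 * real k / phi))"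

text \<open>v_k = a_i iff the point lies in P_{a_i}; the letter a_i is represented by i.\<close>
definition v_word :: "point3 \<Rightarrow> nat \<Rightarrow> nat" where
  "v_word m k = (THE i. i \<in> {1..7} \<and> face_point m k \<in> piece i)"

end

theory Submission
  imports Defs "HOL-Analysis.Kronecker_Approximation_Theorem"
begin

(* Put \<beta> = 2 - phi = 1/phi\<^sup>2. Along the half line the coordinates y = 1/2 + t (phi - 1) and
   z = 1/2 + t \<beta> satisfy y + z = 1 + t, so each interval (j, j + 1) contains exactly one crossing
   with a plane Y = n or Z = n, and it is a Z-crossing iff \<lfloor>1/2 + (j + 1) \<beta>\<rfloor> \<noteq> \<lfloor>1/2 + j \<beta>\<rfloor>;
   the crossings with the planes X = n happen at the even integers. Hence f is the mechanical
   (Sturmian) word of slope \<beta>, written with b and c, with an a inserted in front of each pair of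
   consecutive letters, and v records these pairs. Since 2/phi = -2\<beta> mod 1, the factors of v,
   and the factors of f starting at positions of a fixed residue mod 3, are windows of the
   mechanical word whose intercept runs over the dense orbit 1/2 + 2k\<beta>. Along a dense orbit a
   window of length L takes exactly L + 1 values, one for each arc into which the points -f\<beta>,
   f = 0..L, cut the circle. This gives 2n + 1 for v; in f the residue r contributes
   N(r + n) - N(r) + 1 factors, where N(p) = \<lfloor>2p/3\<rfloor> counts the letters b, c before position p,
   and the three contributions add up to 2n + 3. *)

section \<open>The golden ratio\<close>

lemma phi_gt_1: "1 < phi"
  unfolding phi_def by (simp add: real_less_rsqrt)

lemma phi_gt_3_2: "3/2 < phi"
proof -
  have "2 < sqrt 5" by (simp add: real_less_rsqrt)
  then show ?thesis unfolding phi_def by simp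
qed

lemma phi_lt_2: "phi < 2"
proof -
  have "sqrt 5 < 3" by (rule real_less_lsqrt) auto
  then show ?thesis unfolding phi_def by simp
qed

lemma phi_squared: "phi\<^sup>2 = phi + 1"
  unfolding phi_def power2_eq_square by (simp add: field_simps)

lemma inverse_phi: "1 / phi = phi - 1"
  using phi_squared phi_gt_1 by (simp add: field_simps power2_eq_square)

lemma inverse_phi_squared: "1 / phi\<^sup>2 = 2 - phi"
  using phi_squared phi_gt_1 by (simp add: field_simps power2_eq_square)

lemma phi_irrational: "phi \<notin> \<rat>"
proof
  assume "phi \<in> \<rat>"
  then obtain m n :: nat where n: "n \<noteq> 0" and mn: "\<bar>phi\<bar> = m / n" and "coprime m n"
    by (rule Rats_abs_nat_div_natE)
  have m: "real m = phi * n" using mn phi_gt_1 n by (simp add: field_simps)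
  have "real (m * m) = (phi * phi) * (real n * real n)" by (simp add: m algebra_simps)
  also have "\<dots> = (phi + 1) * (real n * real n)" using phi_squared by (simp add: power2_eq_square)
  also have "\<dots> = real (m * n + n * n)" by (simp add: m algebra_simps)
  finally have mm: "m * m = n * (m + n)" by (simp only: of_nat_eq_iff) (simp add: algebra_simps)
  then have "n dvd m * m" by simp
  with \<open>coprime m n\<close> have "n = 1"
    by (simp add: coprime_absorb_right coprime_commute coprime_dvd_mult_left_iff)
  with mm have "m * m = m + 1" by simp
  then have "m dvd m + 1" by (metis dvd_triv_left)
  then have "m dvd 1" by (simp only: dvd_add_right_iff[OF dvd_refl])
  then show False using \<open>m * m = m + 1\<close> by simp
qed

lemma phi_coefficient_eq_0:
  assumes "a \<in> \<rat>" "b \<in> \<rat>" "a + b * phi \<in> \<rat>"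
  shows "b = 0"
proof (rule ccontr)
  assume "b \<noteq> 0"
  then have "phi = ((a + b * phi) - a) / b" by simp
  also have "\<dots> \<in> \<rat>" using assms by (intro Rats_divide Rats_diff)
  finally show False using phi_irrational by simp
qed

lemma two_minus_phi_irrational: "2 - phi \<notin> \<rat>" "2 * (2 - phi) \<notin> \<rat>"
  using phi_coefficient_eq_0[of 2 "-1"] phi_coefficient_eq_0[of 4 "-2"] by (auto simp: algebra_simps)

lemma half_plus_phi_multiple_notin_Ints:
  assumes "a \<in> \<int>" "b \<in> \<int>"
  shows "a + 1/2 + b * phi \<notin> \<int>"
proof
  assume sum_Ints: "a + 1/2 + b * phi \<in> \<int>"
  moreover have "a + 1/2 \<in> \<rat>" "b \<in> \<rat>" using assms Ints_subset_Rats by auto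
  ultimately have "b = 0" using phi_coefficient_eq_0 Ints_subset_Rats by blast
  then have "1/2 = (a + 1/2 + b * phi) - a" by simp
  also have "\<dots> \<in> \<int>" using sum_Ints assms(1) by (rule Ints_diff)
  finally obtain n where "1/2 = real_of_int n" by (auto elim: Ints_cases)
  then have "1 = 2 * n" by linarith
  then show False by presburger
qed

section \<open>Counting the values of a periodic function along a dense orbit\<close>

locale unit_periodic_cells =
  fixes G :: "real \<Rightarrow> 'b" and K :: "real set"
  assumes periodic: "\<And>t m. G (t + of_int m) = G t"
    and cuts_periodic: "\<And>c m. c \<in> K \<Longrightarrow> c + of_int m \<in> K"
    and finite_cuts: "finite (K \<inter> {0..<1})"
    and cuts_nonempty: "K \<inter> {0..<1} \<noteq> {}"
    and constant_between_cuts: "\<And>s t. s \<le> t \<Longrightarrow> t < s + 1 \<Longrightarrow> K \<inter> {s<..t} = {} \<Longrightarrow> G s = G t"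
    and separates_cuts: "\<And>c d. c \<in> K \<Longrightarrow> d \<in> K \<Longrightarrow> c < d \<Longrightarrow> d < c + 1 \<Longrightarrow> G c \<noteq> G d"
begin

lemma G_frac: "G (frac t) = G t"
  using periodic[of t "- \<lfloor>t\<rfloor>"] by (simp add: frac_def)

lemma cut_frac: "c \<in> K \<Longrightarrow> frac c \<in> K \<inter> {0..<1}"
  using cuts_periodic[of c "- \<lfloor>c\<rfloor>"] frac_lt_1[of c] unfolding frac_def by simp

lemma finite_cuts_unit: "finite (K \<inter> {of_int m..<of_int m + 1})"
proof -
  have "K \<inter> {of_int m..<of_int m + 1} \<subseteq> (\<lambda>c. c + of_int m) ` (K \<inter> {0..<1})"
  proof
    fix c assume "c \<in> K \<inter> {of_int m..<of_int m + 1}"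
    then have "c - of_int m \<in> K \<inter> {0..<1}" using cuts_periodic[of c "- m"] by auto
    then show "c \<in> (\<lambda>c. c + of_int m) ` (K \<inter> {0..<1})" by force
  qed
  then show ?thesis using finite_cuts by (rule finite_subset[OF _ finite_imageI])
qed

lemma value_at_cut: "\<exists>c \<in> K \<inter> {0..<1}. G t = G c"
proof -
  define C where "C = K \<inter> {t - 1<..t}"
  have "C \<subseteq> K \<inter> {of_int (\<lfloor>t\<rfloor> - 1)..<of_int (\<lfloor>t\<rfloor> - 1) + 1} \<union> K \<inter> {of_int \<lfloor>t\<rfloor>..<of_int \<lfloor>t\<rfloor> + 1}"
    unfolding C_def by auto (use real_of_int_floor_add_one_gt[of t] of_int_floor_le[of t] in linarith)+
  then have "finite C" using finite_cuts_unit by (meson finite_Un finite_subset)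
  obtain d where d: "d \<in> K \<inter> {0..<1}" using cuts_nonempty by blast
  have "d + of_int \<lfloor>t - d\<rfloor> \<in> C"
    unfolding C_def using cuts_periodic d by auto linarith+
  then have "C \<noteq> {}" by blast
  define c where "c = Max C"
  have c: "c \<in> K" "t - 1 < c" "c \<le> t"
    using Max_in[OF \<open>finite C\<close> \<open>C \<noteq> {}\<close>] unfolding c_def C_def by auto
  have "y \<le> c" if "y \<in> K" "c < y" "y \<le> t" for y
  proof -
    have "y \<in> C" using that c(2) unfolding C_def by auto
    then show "y \<le> c" unfolding c_def using Max_ge[OF \<open>finite C\<close>] by blast
  qed
  then have "K \<inter> {c<..t} = {}" by force
  then have "G c = G t" using constant_between_cuts c by simp
  then show ?thesis using cut_frac[OF \<open>c \<in> K\<close>] G_frac by metis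
qed

lemma inj_on_cuts: "inj_on G (K \<inter> {0..<1})"
proof (rule inj_onI)
  fix c d assume "c \<in> K \<inter> {0..<1}" "d \<in> K \<inter> {0..<1}" "G c = G d"
  then show "c = d" using separates_cuts[of c d] separates_cuts[of d c] by (cases c d rule: linorder_cases) auto
qed

lemma cut_value_on_dense_orbit:
  fixes x :: "nat \<Rightarrow> real"
  assumes dense: "\<And>lo hi. 0 \<le> lo \<Longrightarrow> lo < hi \<Longrightarrow> hi \<le> 1 \<Longrightarrow> \<exists>k. lo < frac (x k) \<and> frac (x k) < hi"
    and c: "c \<in> K \<inter> {0..<1}"
  shows "G c \<in> range (G \<circ> x)"
proof -
  define D where "D = insert 1 {d \<in> K \<inter> {0..<1}. c < d}"
  have "finite D" unfolding D_def by (rule finite_insert[THEN iffD2], rule finite_subset[OF _ finite_cuts]) auto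
  define d where "d = Min D"
  have "c < d" "d \<le> 1"
    using Min_in[OF \<open>finite D\<close>] Min_le[OF \<open>finite D\<close>] c unfolding d_def D_def by auto
  then obtain k where k: "c < frac (x k)" "frac (x k) < d" using dense c by fastforce
  have "K \<inter> {c<..frac (x k)} = {}"
    using Min_le[OF \<open>finite D\<close>] k frac_lt_1[of "x k"] c unfolding d_def D_def by fastforce
  then have "G c = G (x k)" using constant_between_cuts[of c "frac (x k)"] k c G_frac frac_lt_1[of "x k"] by auto
  then show ?thesis by simp
qed

theorem card_range_dense_orbit:
  fixes x :: "nat \<Rightarrow> real"
  assumes "\<And>lo hi. 0 \<le> lo \<Longrightarrow> lo < hi \<Longrightarrow> hi \<le> 1 \<Longrightarrow> \<exists>k. lo < frac (x k) \<and> frac (x k) < hi"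
  shows "card (range (G \<circ> x)) = card (K \<inter> {0..<1})"
proof -
  have "range (G \<circ> x) = G ` (K \<inter> {0..<1})"
    using value_at_cut cut_value_on_dense_orbit[OF assms] by fastforce
  then show ?thesis using card_image[OF inj_on_cuts] by simp
qed

end

lemma frac_orbit_dense:
  fixes \<theta> x\<^sub>0 lo hi :: real
  assumes "\<theta> \<notin> \<rat>" "0 \<le> lo" "lo < hi" "hi \<le> 1"
  shows "\<exists>k. lo < frac (x\<^sub>0 + real k * \<theta>) \<and> frac (x\<^sub>0 + real k * \<theta>) < hi"
proof -
  obtain h k :: int where "k > 0" and hk: "\<bar>k * \<theta> - h - ((lo + hi) / 2 - x\<^sub>0)\<bar> < (hi - lo) / 2"
    using sequence_of_fractional_parts_is_dense[OF assms(1), where \<alpha> = "(lo + hi) / 2 - x\<^sub>0"] assms(3)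
    by (metis diff_gt_0_iff_gt half_gt_zero)
  define y where "y = x\<^sub>0 + real (nat k) * \<theta> - h"
  have "real (nat k) = real_of_int k" using \<open>k > 0\<close> by simp
  then have "lo < y" "y < hi"
    using hk unfolding y_def abs_less_iff by (simp_all add: field_simps)
  then have "frac (x\<^sub>0 + real (nat k) * \<theta>) = y"
    using assms by (simp add: y_def frac_unique_iff)
  with \<open>lo < y\<close> \<open>y < hi\<close> show ?thesis by blast
qed

section \<open>Mechanical words\<close>

definition mechanical :: "real \<Rightarrow> real \<Rightarrow> nat \<Rightarrow> bool" where
  "mechanical \<beta> x e \<longleftrightarrow> \<lfloor>x + real (Suc e) * \<beta>\<rfloor> \<noteq> \<lfloor>x + real e * \<beta>\<rfloor>"

lemma floor_add_small:
  fixes x b :: real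
  assumes "0 \<le> b" "b < 1"
  shows "\<lfloor>x + b\<rfloor> = \<lfloor>x\<rfloor> + (if 1 - b \<le> frac x then 1 else 0)"
  using assms by (simp add: floor_add frac_eq floor_eq_iff)

lemma floor_mechanical_step:
  assumes "0 \<le> \<beta>" "\<beta> < 1"
  shows "\<lfloor>x + real (Suc e) * \<beta>\<rfloor> = \<lfloor>x + real e * \<beta>\<rfloor> + (if mechanical \<beta> x e then 1 else 0)"
proof -
  have "\<lfloor>x + real (Suc e) * \<beta>\<rfloor> = \<lfloor>x + real e * \<beta>\<rfloor> + (if 1 - \<beta> \<le> frac (x + real e * \<beta>) then 1 else 0)"
    using floor_add_small[OF assms, of "x + real e * \<beta>"] by (simp add: algebra_simps)
  then show ?thesis unfolding mechanical_def by simp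
qed

lemma mechanical_shift: "mechanical \<beta> x (k + e) = mechanical \<beta> (x + real k * \<beta>) e"
  unfolding mechanical_def by (simp add: algebra_simps)

lemma mechanical_add_Ints: "mechanical \<beta> (x + of_int m) e = mechanical \<beta> x e"
proof -
  have "x + of_int m + y = (x + y) + of_int m" for y by simp
  then show ?thesis unfolding mechanical_def by (simp only: floor_add_int) simp
qed

lemma mechanical_first_letters:
  assumes "0 \<le> \<beta>" "\<beta> < 1/2"
  shows "mechanical \<beta> x 0 \<longleftrightarrow> 1 - \<beta> \<le> frac x"
    and "mechanical \<beta> x 1 \<longleftrightarrow> 1 - 2 * \<beta> \<le> frac x \<and> frac x < 1 - \<beta>"
proof -
  have "\<lfloor>x + \<beta>\<rfloor> = \<lfloor>x\<rfloor> + (if 1 - \<beta> \<le> frac x then 1 else 0)"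
    "\<lfloor>x + 2 * \<beta>\<rfloor> = \<lfloor>x\<rfloor> + (if 1 - 2 * \<beta> \<le> frac x then 1 else 0)"
    using floor_add_small[of \<beta> x] floor_add_small[of "2 * \<beta>" x] assms by simp_all
  then show "mechanical \<beta> x 0 \<longleftrightarrow> 1 - \<beta> \<le> frac x"
    and "mechanical \<beta> x 1 \<longleftrightarrow> 1 - 2 * \<beta> \<le> frac x \<and> frac x < 1 - \<beta>"
    unfolding mechanical_def using assms by auto
qed

lemma not_mechanical_twice:
  assumes "0 \<le> \<beta>" "\<beta> < 1/2"
  shows "\<not> (mechanical \<beta> x e \<and> mechanical \<beta> x (Suc e))"
  using mechanical_shift[of \<beta> x e 0] mechanical_shift[of \<beta> x e 1]
    mechanical_first_letters[OF assms, of "x + real e * \<beta>"] by simp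

text \<open>The intercepts at which one of the levels \<open>\<lfloor>c + f \<beta>\<rfloor>\<close>, \<open>a \<le> f \<le> b\<close>, jumps.\<close>

definition level_cuts :: "real \<Rightarrow> nat \<Rightarrow> nat \<Rightarrow> real set" where
  "level_cuts \<beta> a b = {c. \<exists>f\<in>{a..b}. c + real f * \<beta> \<in> \<int>}"

lemma level_cuts_unit:
  "level_cuts \<beta> a b \<inter> {0..<1} = (\<lambda>f. frac (- (real f * \<beta>))) ` {a..b}"
proof (intro equalityI subsetI)
  fix c assume "c \<in> level_cuts \<beta> a b \<inter> {0..<1}"
  then obtain f where "f \<in> {a..b}" "c + real f * \<beta> \<in> \<int>" "0 \<le> c" "c < 1"
    unfolding level_cuts_def by auto
  moreover have "- (real f * \<beta>) - c = - (c + real f * \<beta>)" by simp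
  ultimately have "frac (- (real f * \<beta>)) = c" unfolding frac_unique_iff by (metis Ints_minus)
  with \<open>f \<in> {a..b}\<close> show "c \<in> (\<lambda>f. frac (- (real f * \<beta>))) ` {a..b}" by blast
next
  fix c assume "c \<in> (\<lambda>f. frac (- (real f * \<beta>))) ` {a..b}"
  then obtain f where f: "f \<in> {a..b}" and c: "c = frac (- (real f * \<beta>))" by auto
  have "c + real f * \<beta> = - of_int \<lfloor>- (real f * \<beta>)\<rfloor>" unfolding c frac_def by simp
  then have "c + real f * \<beta> \<in> \<int>" by simp
  moreover have "0 \<le> c" "c < 1" unfolding c by (simp_all add: frac_lt_1)
  ultimately show "c \<in> level_cuts \<beta> a b \<inter> {0..<1}" unfolding level_cuts_def using f by auto
qed

lemma card_level_cuts_unit: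
  assumes "\<beta> \<notin> \<rat>" "a \<le> b"
  shows "card (level_cuts \<beta> a b \<inter> {0..<1}) = b - a + 1"
proof -
  have shifts_distinct: "f = g" if "real f * \<beta> - real g * \<beta> \<in> \<int>" for f g
  proof (rule ccontr)
    assume "f \<noteq> g"
    then have "\<beta> = (real f * \<beta> - real g * \<beta>) / (real f - real g)" by (simp add: field_simps)
    also have "\<dots> \<in> \<rat>" using that Ints_subset_Rats by (intro Rats_divide) auto
    finally show False using assms(1) by simp
  qed
  have "inj_on (\<lambda>f. frac (- (real f * \<beta>))) {a..b}"
  proof (rule inj_onI)
    fix f g assume "frac (- (real f * \<beta>)) = frac (- (real g * \<beta>))"
    then have "frac (- (real g * \<beta>) - - (real f * \<beta>)) = 0" by (rule frac_diff_eq[OF sym])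
    then show "f = g" using shifts_distinct by simp
  qed
  then show ?thesis unfolding level_cuts_unit using card_image assms(2) by fastforce
qed

lemma floor_eq_if_Ints_le:
  fixes u v :: real
  assumes "u \<in> \<int>" "u \<le> v" "v < u + 1"
  shows "\<lfloor>v\<rfloor> = \<lfloor>u\<rfloor>"
  using assms by (metis Ints_cases floor_of_int floor_unique)

lemma mechanical_window_constant:
  assumes "s \<le> t" and no_cut: "level_cuts \<beta> a b \<inter> {s<..t} = {}"
  shows "map (mechanical \<beta> s) [a..<b] = map (mechanical \<beta> t) [a..<b]"
proof -
  have levels: "\<lfloor>s + real f * \<beta>\<rfloor> = \<lfloor>t + real f * \<beta>\<rfloor>" if f: "f \<in> {a..b}" for f
  proof (rule ccontr)
    assume ne: "\<lfloor>s + real f * \<beta>\<rfloor> \<noteq> \<lfloor>t + real f * \<beta>\<rfloor>"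
    define c where "c = of_int \<lfloor>t + real f * \<beta>\<rfloor> - real f * \<beta>"
    have "c + real f * \<beta> \<in> \<int>" unfolding c_def by simp
    with f have "c \<in> level_cuts \<beta> a b" unfolding level_cuts_def by blast
    have "\<lfloor>s + real f * \<beta>\<rfloor> < \<lfloor>t + real f * \<beta>\<rfloor>"
      using ne floor_mono[of "s + real f * \<beta>" "t + real f * \<beta>"] assms(1) by simp
    then have "c \<in> {s<..t}" unfolding c_def by (simp add: floor_less_iff) linarith
    with \<open>c \<in> level_cuts \<beta> a b\<close> no_cut show False by blast
  qed
  show ?thesis
  proof (rule map_cong[OF refl])
    fix e assume "e \<in> set [a..<b]"
    then have "e \<in> {a..b}" "Suc e \<in> {a..b}" by auto
    then show "mechanical \<beta> s e = mechanical \<beta> t e"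
      unfolding mechanical_def by (simp only: levels)
  qed
qed

lemma mechanical_window_separates_cuts:
  assumes "0 \<le> \<beta>" "\<beta> < 1" "c \<in> level_cuts \<beta> a b" "d \<in> level_cuts \<beta> a b" "c < d" "d < c + 1"
  shows "map (mechanical \<beta> c) [a..<b] \<noteq> map (mechanical \<beta> d) [a..<b]"
proof
  assume "map (mechanical \<beta> c) [a..<b] = map (mechanical \<beta> d) [a..<b]"
  then have same_letters: "\<forall>e\<in>set [a..<b]. mechanical \<beta> c e = mechanical \<beta> d e"
    unfolding map_eq_conv .
  define \<delta> where "\<delta> f = \<lfloor>d + real f * \<beta>\<rfloor> - \<lfloor>c + real f * \<beta>\<rfloor>" for f
  have \<delta>_constant: "\<delta> f = \<delta> a" if "a \<le> f" "f \<le> b" for f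
    using that
  proof (induction f rule: dec_induct)
    case (step f)
    then have "mechanical \<beta> c f = mechanical \<beta> d f" using same_letters by simp
    then show ?case using step floor_mechanical_step[OF assms(1,2)] unfolding \<delta>_def by simp
  qed simp
  \<comment> \<open>yet \<open>\<delta>\<close> vanishes at a level where \<open>c\<close> is a cut and equals 1 at one where \<open>d\<close> is\<close>
  obtain f\<^sub>0 where f\<^sub>0: "f\<^sub>0 \<in> {a..b}" "c + real f\<^sub>0 * \<beta> \<in> \<int>"
    using assms(3) unfolding level_cuts_def by blast
  obtain f\<^sub>1 where f\<^sub>1: "f\<^sub>1 \<in> {a..b}" "d + real f\<^sub>1 * \<beta> \<in> \<int>"
    using assms(4) unfolding level_cuts_def by blast
  have "\<delta> f\<^sub>0 = 0"
    unfolding \<delta>_def using floor_eq_if_Ints_le[OF f\<^sub>0(2), of "d + real f\<^sub>0 * \<beta>"] assms(5,6) by simp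
  moreover have "\<delta> f\<^sub>1 = 1"
    using floor_eq_if_Ints_le[of "d + real f\<^sub>1 * \<beta> - 1" "c + real f\<^sub>1 * \<beta>"] f\<^sub>1(2) assms(5,6)
    unfolding \<delta>_def by simp
  ultimately show False using \<delta>_constant[of f\<^sub>0] \<delta>_constant[of f\<^sub>1] f\<^sub>0(1) f\<^sub>1(1) by simp
qed

lemma unit_periodic_cells_mechanical_windows:
  assumes "0 \<le> \<beta>" "\<beta> < 1" "a \<le> b"
  shows "unit_periodic_cells (\<lambda>t. map (mechanical \<beta> t) [a..<b]) (level_cuts \<beta> a b)"
proof
  show "map (mechanical \<beta> (t + of_int m)) [a..<b] = map (mechanical \<beta> t) [a..<b]" for t m
    by (simp add: mechanical_add_Ints)
  show "c + of_int m \<in> level_cuts \<beta> a b" if c: "c \<in> level_cuts \<beta> a b" for c m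
  proof -
    obtain f where f: "f \<in> {a..b}" "c + real f * \<beta> \<in> \<int>" using c unfolding level_cuts_def by blast
    have "c + of_int m + real f * \<beta> = (c + real f * \<beta>) + of_int m" by simp
    also have "\<dots> \<in> \<int>" using f(2) by simp
    finally show ?thesis unfolding level_cuts_def using f(1) by blast
  qed
  show "finite (level_cuts \<beta> a b \<inter> {0..<1})" "level_cuts \<beta> a b \<inter> {0..<1} \<noteq> {}"
    unfolding level_cuts_unit using assms(3) by auto
qed (use mechanical_window_constant mechanical_window_separates_cuts assms(1,2) in auto)

theorem card_mechanical_windows:
  fixes \<beta> :: real and x :: "nat \<Rightarrow> real"
  assumes "0 \<le> \<beta>" "\<beta> < 1" "\<beta> \<notin> \<rat>" "a \<le> b"
    and dense: "\<And>lo hi. 0 \<le> lo \<Longrightarrow> lo < hi \<Longrightarrow> hi \<le> 1 \<Longrightarrow> \<exists>k. lo < frac (x k) \<and> frac (x k) < hi"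
  shows "card (range (\<lambda>k. map (mechanical \<beta> (x k)) [a..<b])) = b - a + 1"
proof -
  interpret unit_periodic_cells "\<lambda>t. map (mechanical \<beta> t) [a..<b]" "level_cuts \<beta> a b"
    using unit_periodic_cells_mechanical_windows assms(1,2,4) .
  show ?thesis
    using card_range_dense_orbit[OF dense] card_level_cuts_unit[OF assms(3,4)] by (simp add: comp_def)
qed

section \<open>Inserting the letter a into a two-letter word\<close>

text \<open>\<open>side_count p\<close> is the number of positions below \<open>p\<close> that are not multiples of 3.\<close>

definition side_count :: "nat \<Rightarrow> nat" where
  "side_count p = 2 * p div 3"

definition interleave_a :: "(nat \<Rightarrow> bool) \<Rightarrow> nat \<Rightarrow> abc" where
  "interleave_a s p = (if 3 dvd p then LA else if s (side_count p) then LC else LB)"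

lemma side_count_add_3: "side_count (3 * k + q) = 2 * k + side_count q"
  unfolding side_count_def by presburger

lemma side_count_Suc: "side_count (Suc p) = side_count p + (if 3 dvd p then 0 else 1)"
  unfolding side_count_def by presburger

lemma side_count_position:
  "\<not> 3 dvd (e + e div 2 + 1)" "side_count (e + e div 2 + 1) = e"
  unfolding side_count_def by presburger+

lemma side_count_le_iff: "side_count p \<le> e \<longleftrightarrow> p \<le> e + e div 2 + 1"
proof -
  have "side_count p \<le> e \<longleftrightarrow> 2 * p < (e + 1) * 3"
    unfolding side_count_def using div_less_iff_less_mult[of 3 "2 * p" "e + 1"] by (simp add: less_Suc_eq_le)
  also have "\<dots> \<longleftrightarrow> p \<le> e + e div 2 + 1" by presburger
  finally show ?thesis .
qed

lemma side_count_mono: "p \<le> q \<Longrightarrow> side_count p \<le> side_count q"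
  unfolding side_count_def by (simp add: div_le_mono)

lemma side_count_sum: "(\<Sum>r<3. side_count (r + n) - side_count r + 1) = 2 * n + 3"
proof -
  have "{..<3::nat} = {0, 1, 2}" by auto
  moreover have "side_count 0 = 0" "side_count 1 = 0" "side_count 2 = 1" by (simp_all add: side_count_def)
  moreover have "side_count 2 \<le> side_count (2 + n)" by (simp add: side_count_mono)
  moreover have "side_count n + side_count (1 + n) + side_count (2 + n) = 2 * n + 1"
  proof (induction n)
    case (Suc n)
    have "side_count (Suc (Suc (Suc n))) = side_count n + 2"
      using side_count_add_3[of 1 n] by (simp add: numeral_3_eq_3)
    then show ?case using Suc by simp
  qed (simp add: side_count_def)
  ultimately show ?thesis by simp
qed

lemma interleave_a_shift: "interleave_a s (3 * k + q) = interleave_a (\<lambda>e. s (2 * k + e)) q"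
  unfolding interleave_a_def side_count_add_3 by (simp add: dvd_add_right_iff)

lemma interleave_a_window_eq_iff:
  "map (interleave_a s) [p..<p + n] = map (interleave_a s') [p..<p + n] \<longleftrightarrow>
   map s [side_count p..<side_count (p + n)] = map s' [side_count p..<side_count (p + n)]"
proof
  assume same: "map (interleave_a s) [p..<p + n] = map (interleave_a s') [p..<p + n]"
  show "map s [side_count p..<side_count (p + n)] = map s' [side_count p..<side_count (p + n)]"
  proof (rule map_cong[OF refl])
    fix e assume e: "e \<in> set [side_count p..<side_count (p + n)]"
    define q where "q = e + e div 2 + 1"
    have "q \<in> set [p..<p + n]" "\<not> 3 dvd q" "side_count q = e"
      using e side_count_position[of e] side_count_le_iff[of "p + n" e] side_count_le_iff[of p e]
      unfolding q_def by auto
    then show "s e = s' e" using same unfolding interleave_a_def by (auto split: if_splits)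
  qed
next
  assume same: "map s [side_count p..<side_count (p + n)] = map s' [side_count p..<side_count (p + n)]"
  show "map (interleave_a s) [p..<p + n] = map (interleave_a s') [p..<p + n]"
  proof (rule map_cong[OF refl])
    fix q assume q: "q \<in> set [p..<p + n]"
    show "interleave_a s q = interleave_a s' q"
    proof (cases "3 dvd q")
      case False
      then have "side_count p \<le> side_count q" "side_count q < side_count (p + n)"
        using q side_count_mono[of p q] side_count_mono[of "Suc q" "p + n"] side_count_Suc[of q] by auto
      then have "s (side_count q) = s' (side_count q)" using same by auto
      then show ?thesis unfolding interleave_a_def by simp
    qed (simp add: interleave_a_def)
  qed
qed

lemma interleave_a_window_phase:
  assumes "2 \<le> n" "map (interleave_a s) [p..<p + n] = map (interleave_a s') [p'..<p' + n]"
  shows "p mod 3 = p' mod 3"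
proof -
  have "interleave_a s (p + i) = interleave_a s' (p' + i)" if "i < n" for i
    using arg_cong[OF assms(2), of "\<lambda>w. w ! i"] that by simp
  from this[of 0] this[of 1] assms(1)
  have "(3 dvd p \<longleftrightarrow> 3 dvd p') \<and> (3 dvd p + 1 \<longleftrightarrow> 3 dvd p' + 1)"
    unfolding interleave_a_def by (auto split: if_splits)
  then show ?thesis by presburger
qed

text \<open>Since \<open>\<Phi>(a\<^sub>1) = acb\<close>, \<open>\<Phi>(a\<^sub>2) = abc\<close> and \<open>\<Phi>(a\<^sub>4) = abb\<close>, the index of the letter whose
  \<open>\<Phi>\<close>-image is \<open>a\<close> followed by the \<open>k\<close>-th pair of letters of \<open>s\<close> (read \<open>True\<close> as \<open>c\<close>).\<close>

definition block_index :: "(nat \<Rightarrow> bool) \<Rightarrow> nat \<Rightarrow> nat" where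
  "block_index s k = (if s (2 * k) then 1 else if s (2 * k + 1) then 2 else 4)"

lemma block_index_shift: "block_index s (k + j) = block_index (\<lambda>e. s (2 * k + e)) j"
  unfolding block_index_def by (simp add: algebra_simps)

lemma block_index_window_eq_iff:
  assumes "\<And>j. \<not> (s (2 * j) \<and> s (2 * j + 1))" "\<And>j. \<not> (s' (2 * j) \<and> s' (2 * j + 1))"
  shows "map (block_index s) [0..<n] = map (block_index s') [0..<n] \<longleftrightarrow>
    map s [0..<2 * n] = map s' [0..<2 * n]"
proof -
  have pair: "block_index s j = block_index s' j \<longleftrightarrow> s (2 * j) = s' (2 * j) \<and> s (2 * j + 1) = s' (2 * j + 1)" for j
    using assms[of j] unfolding block_index_def by auto
  have "(\<forall>j<n. s (2 * j) = s' (2 * j) \<and> s (2 * j + 1) = s' (2 * j + 1)) \<longleftrightarrow> (\<forall>e<2 * n. s e = s' e)"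
  proof
    assume pairs: "\<forall>j<n. s (2 * j) = s' (2 * j) \<and> s (2 * j + 1) = s' (2 * j + 1)"
    show "\<forall>e<2 * n. s e = s' e"
    proof (intro allI impI)
      fix e assume "e < 2 * n"
      then have "e div 2 < n" by simp
      then show "s e = s' e"
        using pairs by (cases "even e") (metis even_two_times_div_two, metis odd_two_times_div_two_succ Suc_eq_plus1)
    qed
  qed auto
  then show ?thesis using pair by (simp add: atLeast0LessThan Ball_def)
qed

section \<open>The crossings of the half line from m0 in direction theta0\<close>

lemma Ints_affine_unit_interval:
  fixes w c s :: real
  assumes "0 < c" "c < 1" "w + (s + 1) * c \<notin> \<int>"
  shows "{t. s < t \<and> t < s + 1 \<and> w + t * c \<in> \<int>} =
    (if \<lfloor>w + (s + 1) * c\<rfloor> = \<lfloor>w + s * c\<rfloor> then {} else {(\<lfloor>w + (s + 1) * c\<rfloor> - w) / c})"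
    (is "?S = _")
proof -
  define N where "N = \<lfloor>w + (s + 1) * c\<rfloor>"
  have step: "w + s * c < w + (s + 1) * c" "w + (s + 1) * c < w + s * c + 1"
    using assms(1,2) by (simp_all add: algebra_simps)
  have "of_int N \<noteq> w + (s + 1) * c" using assms(3) by (metis Ints_of_int)
  then have N_below: "of_int N < w + (s + 1) * c"
    using of_int_floor_le[of "w + (s + 1) * c"] unfolding N_def by (simp add: less_le)
  have N_above: "w + (s + 1) * c < of_int N + 1"
    unfolding N_def by (rule real_of_int_floor_add_one_gt)
  have "t \<in> ?S \<longleftrightarrow> w + s * c < N \<and> t = (N - w) / c" for t
  proof
    assume t: "t \<in> ?S"
    then obtain M where M: "w + t * c = of_int M" by (auto elim: Ints_cases)
    have "s * c < t * c" "t * c < (s + 1) * c" using t assms(1) by (auto intro: mult_strict_right_mono)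
    then have "w + s * c < of_int M" "of_int M < w + (s + 1) * c" using M by linarith+
    then have "M \<le> N" "N < M + 1" using step N_below unfolding N_def by (simp_all add: le_floor_iff floor_less_iff)
    then have "M = N" by simp
    with M \<open>w + s * c < of_int M\<close> show "w + s * c < N \<and> t = (N - w) / c"
      using assms(1) by (auto simp: field_simps)
  next
    assume h: "w + s * c < N \<and> t = (N - w) / c"
    then have crossing: "w + t * c = of_int N" using assms(1) by simp
    then have "s * c < t * c" "t * c < (s + 1) * c" using h N_below by linarith+
    then have "s < t" "t < s + 1" using assms(1) by (simp_all add: mult_less_cancel_right)
    with crossing show "t \<in> ?S" by simp
  qed
  moreover have "w + s * c < N \<longleftrightarrow> N \<noteq> \<lfloor>w + s * c\<rfloor>"
    using step N_above floor_less_iff[of "w + s * c" N] le_floor_iff[of N "w + s * c"] by linarith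
  ultimately show ?thesis unfolding N_def by auto
qed

lemma floor_add_floor_Ints_sum:
  fixes u v :: real
  assumes "u \<notin> \<int>" "u + v \<in> \<int>"
  shows "of_int (\<lfloor>u\<rfloor> + \<lfloor>v\<rfloor>) = u + v - 1"
proof -
  have "frac v = frac (- u)" using assms(2) by (metis add_diff_cancel_left' frac_add_int_left diff_conv_add_uminus)
  then have "frac u + frac v = 1" using assms(1) by (simp add: frac_neg)
  then show ?thesis by (simp add: frac_def)
qed

lemma floor_steps_sum_eq_1:
  fixes a b y\<^sub>0 z\<^sub>0 s :: real
  assumes "a + b = 1" "y\<^sub>0 + z\<^sub>0 \<in> \<int>" "s \<in> \<int>" "y\<^sub>0 + s * a \<notin> \<int>" "y\<^sub>0 + (s + 1) * a \<notin> \<int>"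
  shows "(\<lfloor>y\<^sub>0 + (s + 1) * a\<rfloor> - \<lfloor>y\<^sub>0 + s * a\<rfloor>) + (\<lfloor>z\<^sub>0 + (s + 1) * b\<rfloor> - \<lfloor>z\<^sub>0 + s * b\<rfloor>) = 1"
proof -
  let ?y = "\<lambda>t. y\<^sub>0 + t * a" and ?z = "\<lambda>t. z\<^sub>0 + t * b"
  have sum: "?y t + ?z t = y\<^sub>0 + z\<^sub>0 + t" for t
  proof -
    have "?y t + ?z t = y\<^sub>0 + z\<^sub>0 + t * (a + b)" by (simp add: algebra_simps)
    then show ?thesis using assms(1) by simp
  qed
  have "?y s + ?z s \<in> \<int>" "?y (s + 1) + ?z (s + 1) \<in> \<int>" unfolding sum using assms(2,3) by auto
  then have "of_int (\<lfloor>?y s\<rfloor> + \<lfloor>?z s\<rfloor>) = ?y s + ?z s - 1"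
    "of_int (\<lfloor>?y (s + 1)\<rfloor> + \<lfloor>?z (s + 1)\<rfloor>) = ?y (s + 1) + ?z (s + 1) - 1"
    using floor_add_floor_Ints_sum assms(4,5) by blast+
  then have "real_of_int ((\<lfloor>?y (s + 1)\<rfloor> + \<lfloor>?z (s + 1)\<rfloor>) - (\<lfloor>?y s\<rfloor> + \<lfloor>?z s\<rfloor>)) = 1"
    unfolding of_int_diff sum by linarith
  then show ?thesis by (simp only: of_int_eq_1_iff)
qed

lemma unique_side_crossing:
  fixes a b y\<^sub>0 z\<^sub>0 s :: real
  assumes slopes: "0 < a" "0 < b" "a + b = 1" and "y\<^sub>0 + z\<^sub>0 \<in> \<int>" "s \<in> \<int>"
    and off_grid: "y\<^sub>0 + s * a \<notin> \<int>" "y\<^sub>0 + (s + 1) * a \<notin> \<int>"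
  obtains t where "{t. s < t \<and> t < s + 1 \<and> (y\<^sub>0 + t * a \<in> \<int> \<or> z\<^sub>0 + t * b \<in> \<int>)} = {t}"
    and "y\<^sub>0 + t * a \<in> \<int> \<longleftrightarrow> \<lfloor>z\<^sub>0 + (s + 1) * b\<rfloor> = \<lfloor>z\<^sub>0 + s * b\<rfloor>"
proof -
  let ?y = "\<lambda>t. y\<^sub>0 + t * a" and ?z = "\<lambda>t. z\<^sub>0 + t * b"
  \<comment> \<open>exactly one of the two coordinates passes an integer\<close>
  have floors: "(\<lfloor>?y (s + 1)\<rfloor> - \<lfloor>?y s\<rfloor>) + (\<lfloor>?z (s + 1)\<rfloor> - \<lfloor>?z s\<rfloor>) = 1"
    using floor_steps_sum_eq_1 assms(3-7) .
  have mono: "\<lfloor>?y s\<rfloor> \<le> \<lfloor>?y (s + 1)\<rfloor>" "\<lfloor>?z s\<rfloor> \<le> \<lfloor>?z (s + 1)\<rfloor>"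
    using slopes by (auto intro!: floor_mono simp: algebra_simps)
  have "?y (s + 1) + ?z (s + 1) = (y\<^sub>0 + z\<^sub>0) + (s + 1) * (a + b)" by (simp add: algebra_simps)
  also have "\<dots> = (y\<^sub>0 + z\<^sub>0) + (s + 1)" using slopes(3) by simp
  also have "\<dots> \<in> \<int>" by (rule Ints_add) (use assms(4,5) in auto)
  finally have "?z (s + 1) \<notin> \<int>" using off_grid(2) by (metis Ints_diff add_diff_cancel_right')
  then have Y: "{t. s < t \<and> t < s + 1 \<and> ?y t \<in> \<int>} =
      (if \<lfloor>?y (s + 1)\<rfloor> = \<lfloor>?y s\<rfloor> then {} else {(\<lfloor>?y (s + 1)\<rfloor> - y\<^sub>0) / a})"
    and Z: "{t. s < t \<and> t < s + 1 \<and> ?z t \<in> \<int>} =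
      (if \<lfloor>?z (s + 1)\<rfloor> = \<lfloor>?z s\<rfloor> then {} else {(\<lfloor>?z (s + 1)\<rfloor> - z\<^sub>0) / b})"
    using Ints_affine_unit_interval slopes off_grid(2) by auto
  show ?thesis
  proof (cases "\<lfloor>?z (s + 1)\<rfloor> = \<lfloor>?z s\<rfloor>")
    case True
    with floors have "\<lfloor>?y (s + 1)\<rfloor> \<noteq> \<lfloor>?y s\<rfloor>" by simp
    then show ?thesis using True Y Z by (intro that[of "(\<lfloor>?y (s + 1)\<rfloor> - y\<^sub>0) / a"]) (auto simp: set_eq_iff)
  next
    case False
    with floors mono have "\<lfloor>?y (s + 1)\<rfloor> = \<lfloor>?y s\<rfloor>" by linarith
    then show ?thesis using False Y Z by (intro that[of "(\<lfloor>?z (s + 1)\<rfloor> - z\<^sub>0) / b"]) (auto simp: set_eq_iff)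
  qed
qed

lemma pt3_m0_theta0: "pt3 m0 theta0 t = (t / 2, 1/2 + t * (phi - 1), 1/2 + t * (2 - phi))"
  unfolding pt3_def m0_def theta0_def by (simp add: inverse_phi inverse_phi_squared)

lemma crossing_times_m0:
  "t \<in> crossing_times m0 theta0 \<longleftrightarrow>
     0 \<le> t \<and> (t / 2 \<in> \<int> \<or> 1/2 + t * (phi - 1) \<in> \<int> \<or> 1/2 + t * (2 - phi) \<in> \<int>)"
  unfolding crossing_times_def pt3_m0_theta0 by simp

lemma crossing_letter_m0:
  "crossing_letter m0 theta0 t =
     (if t / 2 \<in> \<int> then LA else if 1/2 + t * (phi - 1) \<in> \<int> then LB else LC)"
  unfolding crossing_letter_def pt3_m0_theta0 by simp

lemma side_coordinates_notin_Ints: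
  "1/2 + real j * (phi - 1) \<notin> \<int>" "1/2 + real j * (2 - phi) \<notin> \<int>"
proof -
  have "- real j + 1/2 + real j * phi \<notin> \<int>" "2 * real j + 1/2 + (- real j) * phi \<notin> \<int>"
    by (intro half_plus_phi_multiple_notin_Ints; simp)+
  moreover have "1/2 + real j * (phi - 1) = - real j + 1/2 + real j * phi"
    "1/2 + real j * (2 - phi) = 2 * real j + 1/2 + (- real j) * phi" by (simp_all add: algebra_simps)
  ultimately show "1/2 + real j * (phi - 1) \<notin> \<int>" "1/2 + real j * (2 - phi) \<notin> \<int>"
    by (simp_all only: not_False_eq_True)
qed

lemma half_Ints_iff_even: "real j / 2 \<in> \<int> \<longleftrightarrow> even j"
proof
  assume "real j / 2 \<in> \<int>"
  then obtain m where "real j / 2 = of_int m" by (auto elim: Ints_cases)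
  then have "of_int (int j) = (of_int (2 * m) :: real)" by simp
  then have "int j = 2 * m" by (simp only: of_int_eq_iff)
  then show "even j" by presburger
qed auto

lemma integer_crossing_times: "real j \<in> crossing_times m0 theta0 \<longleftrightarrow> even j"
  unfolding crossing_times_m0 half_Ints_iff_even using side_coordinates_notin_Ints by auto

lemma crossing_times_unit_interval:
  obtains t where "crossing_times m0 theta0 \<inter> {real j<..<real j + 1} = {t}"
    and "crossing_letter m0 theta0 t = (if mechanical (2 - phi) (1/2) j then LC else LB)"
proof -
  obtain t where side: "{t. real j < t \<and> t < real j + 1 \<and>
      (1/2 + t * (phi - 1) \<in> \<int> \<or> 1/2 + t * (2 - phi) \<in> \<int>)} = {t}"
    and B: "1/2 + t * (phi - 1) \<in> \<int> \<longleftrightarrow> \<lfloor>1/2 + (real j + 1) * (2 - phi)\<rfloor> = \<lfloor>1/2 + real j * (2 - phi)\<rfloor>"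
  proof (rule unique_side_crossing[of "phi - 1" "2 - phi" "1/2" "1/2" "real j"])
    show "1/2 + real j * (phi - 1) \<notin> \<int>" "1/2 + (real j + 1) * (phi - 1) \<notin> \<int>"
      using side_coordinates_notin_Ints(1)[of j] side_coordinates_notin_Ints(1)[of "Suc j"]
      by (simp_all add: add.commute)
  qed (use phi_gt_1 phi_lt_2 in auto)
  have no_A: "u / 2 \<notin> \<int>" if "real j < u" "u < real j + 1" for u
  proof
    assume "u / 2 \<in> \<int>"
    then obtain m where "u = of_int (2 * m)" by (auto elim!: Ints_cases simp: field_simps)
    with that have "int j < 2 * m" "2 * m < int j + 1" by linarith+
    then show False by linarith
  qed
  have "crossing_times m0 theta0 \<inter> {real j<..<real j + 1} =
      {t. real j < t \<and> t < real j + 1 \<and> (1/2 + t * (phi - 1) \<in> \<int> \<or> 1/2 + t * (2 - phi) \<in> \<int>)}"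
    using no_A by (auto simp: crossing_times_m0)
  moreover have "t / 2 \<notin> \<int>" using side no_A by blast
  ultimately show ?thesis
    using side B that unfolding crossing_letter_m0 mechanical_def by (simp add: add.commute)
qed

text \<open>The \<open>p\<close>-th crossing: those with the planes \<open>X = n\<close> are at the times \<open>2k = side_count (3k)\<close>, and
  the \<open>j\<close>-th of the others is the only crossing in \<open>(j, j + 1)\<close>.\<close>

definition crossing_time :: "nat \<Rightarrow> real" where
  "crossing_time p = (if 3 dvd p then real (side_count p)
     else the_elem (crossing_times m0 theta0 \<inter> {real (side_count p)<..<real (side_count p) + 1}))"

lemma side_crossing_time:
  assumes "\<not> 3 dvd p"
  shows "crossing_times m0 theta0 \<inter> {real (side_count p)<..<real (side_count p) + 1} = {crossing_time p}"
    and "crossing_letter m0 theta0 (crossing_time p) =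
      (if mechanical (2 - phi) (1/2) (side_count p) then LC else LB)"
proof -
  obtain t where "crossing_times m0 theta0 \<inter> {real (side_count p)<..<real (side_count p) + 1} = {t}"
    and "crossing_letter m0 theta0 t = (if mechanical (2 - phi) (1/2) (side_count p) then LC else LB)"
    by (rule crossing_times_unit_interval)
  then show "crossing_times m0 theta0 \<inter> {real (side_count p)<..<real (side_count p) + 1} = {crossing_time p}"
    and "crossing_letter m0 theta0 (crossing_time p) =
      (if mechanical (2 - phi) (1/2) (side_count p) then LC else LB)"
    unfolding crossing_time_def using assms by simp_all
qed

lemma crossing_time_strictly_inside:
  "\<not> 3 dvd p \<Longrightarrow> crossing_time p \<in> {real (side_count p)<..<real (side_count p) + 1}"
  using side_crossing_time(1) by blast

lemma crossing_time_bounds: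
  "real (side_count p) \<le> crossing_time p" "crossing_time p < real (side_count p) + 1"
  using crossing_time_strictly_inside[of p] by (cases "3 dvd p"; simp add: crossing_time_def)+

lemma strict_mono_crossing_time: "strict_mono crossing_time"
proof (rule strict_monoI_Suc)
  fix p
  show "crossing_time p < crossing_time (Suc p)"
  proof (cases "3 dvd p")
    case True
    then have "\<not> 3 dvd Suc p" "side_count (Suc p) = side_count p" using side_count_Suc by presburger+
    then show ?thesis using crossing_time_strictly_inside[of "Suc p"] True by (simp add: crossing_time_def)
  next
    case False
    then have "side_count (Suc p) = side_count p + 1" using side_count_Suc by simp
    then show ?thesis using crossing_time_bounds[of p] crossing_time_bounds(1)[of "Suc p"] by simp
  qed
qed

lemma range_crossing_time: "range crossing_time = crossing_times m0 theta0"
proof (intro equalityI subsetI)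
  fix t assume "t \<in> range crossing_time"
  then obtain p where "t = crossing_time p" by blast
  then show "t \<in> crossing_times m0 theta0"
    using side_crossing_time(1)[of p] integer_crossing_times[of "side_count p"]
    by (cases "3 dvd p") (auto simp: crossing_time_def side_count_def)
next
  fix t assume t: "t \<in> crossing_times m0 theta0"
  define j where "j = nat \<lfloor>t\<rfloor>"
  have "0 \<le> t" using t by (simp add: crossing_times_m0)
  then have j: "real j \<le> t" "t < real j + 1" unfolding j_def by linarith+
  show "t \<in> range crossing_time"
  proof (cases "t = real j")
    case True
    then obtain k where "j = 2 * k" using t integer_crossing_times by blast
    then have "crossing_time (3 * k) = t" using True by (simp add: crossing_time_def side_count_def)
    then show ?thesis by (metis rangeI)
  next
    case False
    define p where "p = j + j div 2 + 1"
    have "\<not> 3 dvd p" "side_count p = j" unfolding p_def using side_count_position by simp_all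
    have "real j < t" using order_le_neq_trans[OF j(1)] False by simp
    then have "t \<in> crossing_times m0 theta0 \<inter> {real (side_count p)<..<real (side_count p) + 1}"
      using t j(2) unfolding \<open>side_count p = j\<close> by simp
    then show ?thesis unfolding side_crossing_time(1)[OF \<open>\<not> 3 dvd p\<close>] by simp
  qed
qed

lemma the_rank_strict_mono:
  fixes \<tau> :: "nat \<Rightarrow> 'a::linorder"
  assumes "strict_mono \<tau>"
  shows "(THE t. t \<in> range \<tau> \<and> card {s \<in> range \<tau>. s < t} = p) = \<tau> p"
proof -
  have "{s \<in> range \<tau>. s < \<tau> q} = \<tau> ` {..<q}" for q
    using strict_mono_less[OF assms] by auto
  then have card_below: "card {s \<in> range \<tau>. s < \<tau> q} = q" for q
    using card_image[OF strict_mono_imp_inj_on[OF assms]] by simp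
  show ?thesis by (rule the_equality) (use card_below in auto)
qed

theorem billiard_word_m0: "billiard_word m0 theta0 = interleave_a (mechanical (2 - phi) (1/2))"
proof
  fix p
  have "billiard_word m0 theta0 p = crossing_letter m0 theta0 (crossing_time p)"
    unfolding billiard_word_def range_crossing_time[symmetric]
      the_rank_strict_mono[OF strict_mono_crossing_time] ..
  also have "\<dots> = interleave_a (mechanical (2 - phi) (1/2)) p"
  proof (cases "3 dvd p")
    case True
    then have "even (side_count p)" unfolding side_count_def by presburger
    then show ?thesis
      using True by (simp add: crossing_time_def interleave_a_def crossing_letter_m0 half_Ints_iff_even)
  qed (simp add: side_crossing_time(2) interleave_a_def)
  finally show "billiard_word m0 theta0 p = interleave_a (mechanical (2 - phi) (1/2)) p" .
qed

section \<open>The coding v on the face X = 0\<close>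

lemma face_point_m0:
  "face_point m0 k = (1 - frac (1/2 + real (2 * k) * (2 - phi)), frac (1/2 + real (2 * k) * (2 - phi)))"
proof -
  define x where "x = 1/2 + real (2 * k) * (2 - phi)"
  have "x \<notin> \<int>" unfolding x_def by (rule side_coordinates_notin_Ints(2))
  have "2 * real k / phi = 2 * real k * (phi - 1)"
    using inverse_phi by (metis times_divide_eq_right mult_1_right)
  then have y: "1/2 + 2 * real k / phi = - x + of_int (2 * int k + 1)"
    and z: "1/2 - 2 * real k / phi = x + of_int (- 2 * int k)"
    unfolding x_def by (simp_all add: algebra_simps)
  have "frac (1/2 + 2 * real k / phi) = 1 - frac x"
    unfolding y frac_add_of_int_right using \<open>x \<notin> \<int>\<close> by (simp add: frac_neg)
  moreover have "frac (1/2 - 2 * real k / phi) = frac x"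
    unfolding z frac_add_of_int_right ..
  ultimately show ?thesis unfolding face_point_def m0_def x_def by simp
qed

lemma piece_antidiagonal:
  assumes "0 < w" "w < 1"
  shows "(1 - w, w) \<in> piece i \<longleftrightarrow>
    (i = 1 \<and> phi - 1 < w) \<or> (i = 2 \<and> 2 * phi - 3 < w \<and> w < phi - 1) \<or> (i = 4 \<and> w < 2 * phi - 3)"
proof -
  have quotient: "(1 - w) / phi = (1 - w) * (phi - 1)"
    using inverse_phi by (metis times_divide_eq_right mult_1_right)
  have "(phi - 1) * phi = 1" using phi_squared by (simp add: algebra_simps power2_eq_square)
  then have "w < (2 - phi) + (1 - w) * (phi - 1) \<longleftrightarrow> w * phi < (phi - 1) * phi"
    and "(2 - phi) + (1 - w) * (phi - 1) < w \<longleftrightarrow> (phi - 1) * phi < w * phi"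
    by (simp_all add: algebra_simps)
  then have upper: "w < (2 - phi) + (1 - w) / phi \<longleftrightarrow> w < phi - 1"
    and upper': "(2 - phi) + (1 - w) / phi < w \<longleftrightarrow> phi - 1 < w"
    unfolding quotient using phi_gt_1 by simp_all
  have "(2 * phi - 3) * phi = 2 - phi" using phi_squared by (simp add: algebra_simps power2_eq_square)
  then have "(3 - 2 * phi) + (1 - w) * (phi - 1) < w \<longleftrightarrow> (2 * phi - 3) * phi < w * phi"
    by (simp add: algebra_simps)
  then have lower: "(3 - 2 * phi) + (1 - w) / phi < w \<longleftrightarrow> 2 * phi - 3 < w"
    unfolding quotient using phi_gt_1 by simp
  show ?thesis
    unfolding piece_def using assms upper upper' lower phi_gt_3_2 phi_lt_2 by auto
qed

lemma frac_even_side_coordinate: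
  assumes "w = frac (1/2 + real (2 * k) * (2 - phi))"
  shows "0 < w" "w < 1" "w \<noteq> phi - 1" "w \<noteq> 2 * phi - 3"
proof -
  define x where "x = 1/2 + real (2 * k) * (2 - phi)"
  have "x + real e * (2 - phi) \<notin> \<int>" for e
    using side_coordinates_notin_Ints(2)[of "2 * k + e"] unfolding x_def by (simp add: algebra_simps)
  from this[of 0] this[of 1] this[of 2]
  have off_grid: "x \<notin> \<int>" "x + (2 - phi) \<notin> \<int>" "x + 2 * (2 - phi) \<notin> \<int>" by simp_all
  show "0 < w" "w < 1" using off_grid(1) unfolding assms x_def[symmetric] by (simp_all add: frac_lt_1)
  show "w \<noteq> phi - 1"
  proof
    assume "w = phi - 1"
    then have "x + (2 - phi) - 1 \<in> \<int>" unfolding assms x_def[symmetric] frac_unique_iff by (simp add: algebra_simps)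
    then show False using off_grid(2) by (metis Ints_1 Ints_add diff_add_cancel)
  qed
  show "w \<noteq> 2 * phi - 3"
  proof
    assume "w = 2 * phi - 3"
    then have "x + 2 * (2 - phi) - 1 \<in> \<int>" unfolding assms x_def[symmetric] frac_unique_iff by (simp add: algebra_simps)
    then show False using off_grid(3) by (metis Ints_1 Ints_add diff_add_cancel)
  qed
qed

lemma block_index_m0:
  assumes "w = frac (1/2 + real (2 * k) * (2 - phi))"
  shows "block_index (mechanical (2 - phi) (1/2)) k = (if phi - 1 < w then 1 else if 2 * phi - 3 < w then 2 else 4)"
proof -
  define x where "x = 1/2 + real (2 * k) * (2 - phi)"
  have "mechanical (2 - phi) (1/2) (2 * k) = mechanical (2 - phi) x 0"
    "mechanical (2 - phi) (1/2) (2 * k + 1) = mechanical (2 - phi) x 1"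
    unfolding x_def using mechanical_shift[of "2 - phi" "1/2" "2 * k" 0] mechanical_shift[of "2 - phi" "1/2" "2 * k" 1]
    by simp_all
  moreover have "mechanical (2 - phi) x 0 \<longleftrightarrow> phi - 1 \<le> w"
    "mechanical (2 - phi) x 1 \<longleftrightarrow> 2 * phi - 3 \<le> w \<and> w < phi - 1"
    using mechanical_first_letters[of "2 - phi" x] phi_gt_3_2 phi_lt_2 unfolding assms x_def by simp_all
  ultimately show ?thesis
    unfolding block_index_def using frac_even_side_coordinate(3,4)[OF assms] by auto
qed

lemma v_word_m0_frac:
  assumes "w = frac (1/2 + real (2 * k) * (2 - phi))"
  shows "v_word m0 k = (if phi - 1 < w then 1 else if 2 * phi - 3 < w then 2 else 4)"
    (is "_ = ?i")
  unfolding v_word_def face_point_m0 assms[symmetric]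
proof (rule the_equality)
  have w: "0 < w" "w < 1" "w \<noteq> phi - 1" "w \<noteq> 2 * phi - 3" using frac_even_side_coordinate[OF assms] .
  show "?i \<in> {1..7} \<and> (1 - w, w) \<in> piece ?i"
    unfolding piece_antidiagonal[OF w(1,2)] using w(3,4) by auto
  show "j = ?i" if "j \<in> {1..7} \<and> (1 - w, w) \<in> piece j" for j
    using that phi_lt_2 unfolding piece_antidiagonal[OF w(1,2)] by auto
qed

theorem v_word_m0: "v_word m0 = block_index (mechanical (2 - phi) (1/2))"
  using v_word_m0_frac block_index_m0 by auto

section \<open>Factor complexities\<close>

lemma complexity_factors: "complexity (factors w) n = card (range (\<lambda>i. map w [i..<i + n]))"
proof -
  have "{u \<in> factors w. length u = n} = range (\<lambda>i. map w [i..<i + n])"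
    unfolding factors_def by auto
  then show ?thesis unfolding complexity_def by simp
qed

lemma map_upt_shift_eqI:
  assumes "\<And>i. i < n \<Longrightarrow> f (a + i) = g (b + i)"
  shows "map f [a..<a + n] = map g [b..<b + n]"
  using assms by (intro nth_equalityI) auto

lemma card_range_eq_if_same_fibres:
  assumes "\<And>k l. A k = A l \<longleftrightarrow> B k = B l"
  shows "card (range A) = card (range B)"
proof -
  let ?AB = "range (\<lambda>k. (A k, B k))"
  have "inj_on fst ?AB" "inj_on snd ?AB" using assms by (auto intro!: inj_onI)
  moreover have "range A = fst ` ?AB" "range B = snd ` ?AB" by (auto simp: image_iff)
  ultimately show ?thesis by (simp add: card_image)
qed

lemma dense_even_side_orbit:
  assumes "0 \<le> lo" "lo < hi" "hi \<le> 1"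
  shows "\<exists>k. lo < frac (1/2 + real (2 * k) * (2 - phi)) \<and> frac (1/2 + real (2 * k) * (2 - phi)) < hi"
  using frac_orbit_dense[OF two_minus_phi_irrational(2) assms, of "1/2"] by (simp add: algebra_simps)

theorem v_word_complexity: "complexity (factors (v_word m0)) n = 2 * n + 1"
proof -
  define \<beta> where "\<beta> = 2 - phi"
  define x where "x k = 1/2 + real (2 * k) * \<beta>" for k
  have \<beta>: "0 \<le> \<beta>" "\<beta> < 1/2" "\<beta> \<notin> \<rat>"
    unfolding \<beta>_def using phi_gt_3_2 phi_lt_2 two_minus_phi_irrational by auto
  have window: "map (v_word m0) [i..<i + n] = map (block_index (mechanical \<beta> (x i))) [0..<n]" for i
    unfolding v_word_m0 \<beta>_def[symmetric]
    by (rule map_upt_shift_eqI[where b = 0, simplified]) (simp add: block_index_shift mechanical_shift x_def)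
  have no_twice: "\<not> (mechanical \<beta> (x i) (2 * j) \<and> mechanical \<beta> (x i) (2 * j + 1))" for i j
    using not_mechanical_twice[of \<beta>] \<beta> by simp
  have "complexity (factors (v_word m0)) n = card (range (\<lambda>i. map (mechanical \<beta> (x i)) [0..<2 * n]))"
    unfolding complexity_factors window
    by (intro card_range_eq_if_same_fibres block_index_window_eq_iff no_twice)
  also have "\<dots> = 2 * n + 1"
    using card_mechanical_windows[of \<beta> 0 "2 * n" x] \<beta> dense_even_side_orbit unfolding x_def \<beta>_def by simp
  finally show ?thesis .
qed

theorem billiard_word_complexity:
  assumes "2 \<le> n"
  shows "complexity (factors (billiard_word m0 theta0)) n = 2 * n + 3"
proof -
  define \<beta> where "\<beta> = 2 - phi"
  define x where "x k = 1/2 + real (2 * k) * \<beta>" for k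
  define W where "W p = map (interleave_a (mechanical \<beta> (1/2))) [p..<p + n]" for p
  define C where "C r = range (\<lambda>k. W (3 * k + r))" for r
  have \<beta>: "0 \<le> \<beta>" "\<beta> < 1" "\<beta> \<notin> \<rat>"
    unfolding \<beta>_def using phi_gt_3_2 phi_lt_2 two_minus_phi_irrational by auto
  have window: "W (3 * k + r) = map (interleave_a (mechanical \<beta> (x k))) [r..<r + n]" for k r
    unfolding W_def by (rule map_upt_shift_eqI) (simp add: interleave_a_shift mechanical_shift x_def add.assoc)
  have card_C: "card (C r) = side_count (r + n) - side_count r + 1" for r
  proof -
    have "card (C r) = card (range (\<lambda>k. map (mechanical \<beta> (x k)) [side_count r..<side_count (r + n)]))"
      unfolding C_def window by (intro card_range_eq_if_same_fibres interleave_a_window_eq_iff)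
    also have "\<dots> = side_count (r + n) - side_count r + 1"
      using card_mechanical_windows[OF \<beta> side_count_mono, of r "r + n" x] dense_even_side_orbit
      unfolding x_def \<beta>_def by simp
    finally show ?thesis .
  qed
  have "range W = (\<Union>r\<in>{..<3}. C r)"
  proof (intro equalityI subsetI)
    fix w assume "w \<in> range W"
    then obtain p where "w = W (3 * (p div 3) + p mod 3)" by auto
    then have "w \<in> C (p mod 3)" unfolding C_def by blast
    then show "w \<in> (\<Union>r\<in>{..<3}. C r)" by auto
  qed (auto simp: C_def)
  moreover have "C r \<inter> C r' = {}" if "r < 3" "r' < 3" "r \<noteq> r'" for r r'
    using interleave_a_window_phase[OF assms] that unfolding C_def W_def by fastforce
  moreover have "finite (C r)" for r using card_C card_ge_0_finite by (metis add_gr_0 zero_less_one)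
  ultimately have "card (range W) = (\<Sum>r<3. card (C r))" by (simp add: card_UN_disjoint)
  then show ?thesis
    unfolding complexity_factors billiard_word_m0 W_def[symmetric] \<beta>_def[symmetric] card_C side_count_sum .
qed

theorem proposition3:
  shows "(\<forall>n::nat. complexity (factors (v_word m0)) n = 2 * n + 1) \<and>
         (\<forall>n::nat. n \<ge> 2 \<longrightarrow> complexity (factors (billiard_word m0 theta0)) n = 2 * n + 3)"
  using v_word_complexity billiard_word_complexity by blast

end
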